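(* Let $s>0$, let $\mathcal{G}=\{g_x\}_{x\in\mathbb{Z}}$ be an $\mathcal{A}^1_s$-self-localized frame for $\mathcal{H}$ with canonical dual $\tilde{\mathcal{G}}=\{\tilde g_x\}$, and write $\mathcal{H}^p=\mathcal{H}^p(\mathcal{G},\tilde{\mathcal{G}})$. Let $\mathcal{F}=\{f_n\}_{n\in\mathbb{Z}}$ be a frame for $\mathcal{H}$ with lower frame bound $A$, and let $\mathcal{E}=\{e_n\}_{n\in\mathbb{Z}}\subset\mathcal{H}$ satisfy $\|e_n-f_n\|_{\mathcal{H}^p}\le\varepsilon_n$ for all $n$ and all $1\le p\le\infty$, where $\sup_n\varepsilon_n\le\varepsilon$. Consider the statements (i) $\sum_{n\in\mathbb{Z}}\|e_n-f_n\|_{\mathcal{H}^\infty}\le\varepsilon$; (ii) $\sup_{x\in\mathbb{Z}}\sum_{n\in\mathbb{Z}}|\langle e_n-f_n,\tilde g_x\rangle|\le\varepsilon$; (iii) $\left\|\sum_{n\in F}c_n(e_n-f_n)\right\|\le\sqrt{\|A(\mathcal{G},\mathcal{G})\|_{\mathcal{A}^1}}\,\varepsilon\left(\sum_{n\in F}|c_n|^2\right)^{1/2}$ for every finite set $F\subset\mathbb{Z}$ and all scalars $(c_n)_{n\in F}$. Then (i) implies (ii) and (ii) implies (iii). Moreover, if $\varepsilon>0$ is small enough (for instance $\sqrt{\|A(\mathcal{G},\mathcal{G})\|_{\mathcal{A}^1}}\,\varepsilon<\sqrt{A}$) and one of (i)–(iii) holds, then $\mathcal{E}$ is a frame for $\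mathcal{H}$.
   Context: A sequence $\{h_n\}_{n\in\mathbb{Z}}$ in a separable Hilbert space $\mathcal{H}$ is a frame with bounds $0<A\le B<\infty$ if $A\|f\|^2\le\sum_n|\langle f,h_n\rangle|^2\le B\|f\|^2$ for all $f\in\mathcal{H}$; its frame operator $Sf=\sum_n\langle f,h_n\rangle h_n$ is boundedly invertible and $\{S^{-1}h_n\}$ is the canonical dual frame. For $s\ge0$, $v_s(x)=(1+|x|)^s$, and the Schur algebra $\mathcal{A}^1_s$ is the set of matrices $M=(m_{kl})_{k,l\in\mathbb{Z}}$ with $\|M\|_{\mathcal{A}^1_s}:=\max\{\sup_k\sum_l|m_{kl}|v_s(k-l),\ \sup_l\sum_k|m_{kl}|v_s(k-l)\}<\infty$; $\mathcal{A}^1:=\mathcal{A}^1_0$. The Gramian $A(\mathcal{G},\mathcal{G})$ has entries $\langle g_x,g_y\rangle$; $\mathcal{G}$ is $\mathcal{A}^1_s$-self-localized if $A(\mathcal{G},\mathcal{G})\in\mathcal{A}^1_s$. Spaces $\mathcal{H}^p(\mathcal{G},\tilde{\mathcal{G}})$: for $1\le p\le2$, $\mathcal{H}^p=\{f\in\mathcal{H}: f=\sum_x\langle f,\tilde g_x\rangle g_x,\ (\langle f,\tilde g_x\rangle)_x\in\ell^p\}$ with norm $\|f\|_{\mathcal{H}^p}=\|(\langle f,\tilde g_x\rangle)_x\|_{\ell^p}$; for $2<p<\infty$, $\mathcal{H}^p$ is the completion of the finite linear combinations of elements of $\mathcal{G}$ in this norm; $\mathcal{H}^\infty:=(\mathcal{H}^1)'$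 with norm $\|f\|_{\mathcal{H}^\infty}=\sup_x|\langle f,\tilde g_x\rangle|$. In particular for $h\in\mathcal{H}$, $\|h\|_{\mathcal{H}^1}=\sum_x|\langle h,\tilde g_x\rangle|$ and $\|h\|_{\mathcal{H}^\infty}=\sup_x|\langle h,\tilde g_x\rangle|$. *)

theory Defs
  imports "HOL-Analysis.Analysis"
begin

text \<open>HOL-Analysis only provides real inner product spaces. A complex Hilbert space
is modelled as a Banach space (over the reals) with a compatible complex scalar
multiplication and an inner product, linear in the first argument, conjugate
symmetric, and inducing the norm.\<close>

class chilbert = banach +
  fixes scaleC :: "complex \<Rightarrow> 'a \<Rightarrow> 'a" (infixr \<open>*\<^sub>C\<close> 75)
    and cinner :: "'a \<Rightarrow> 'a \<Rightarrow> complex"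
  assumes scaleC_add_right: "a *\<^sub>C (x + y) = a *\<^sub>C x + a *\<^sub>C y"
    and scaleC_add_left: "(a + b) *\<^sub>C x = a *\<^sub>C x + b *\<^sub>C x"
    and scaleC_scaleC: "a *\<^sub>C (b *\<^sub>C x) = (a * b) *\<^sub>C x"
    and scaleC_one: "1 *\<^sub>C x = x"
    and scaleR_scaleC: "scaleR r x = complex_of_real r *\<^sub>C x"
    and cinner_add_left: "cinner (x + y) z = cinner x z + cinner y z"
    and cinner_scaleC_left: "cinner (a *\<^sub>C x) y = a * cinner x y"
    and cinner_commute: "cinner x y = cnj (cinner y x)"
    and cinner_self: "cinner x x = complex_of_real ((norm x)\<^sup>2)"

definition frame :: "(int \<Rightarrow> 'a::chilbert) \<Rightarrow> real \<Rightarrow> real \<Rightarrow> bool" where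
  "frame h A B \<longleftrightarrow> 0 < A \<and> A \<le> B \<and>
     (\<forall>f. (\<lambda>n. (cmod (cinner f (h n)))\<^sup>2) summable_on UNIV \<and>
          A * (norm f)\<^sup>2 \<le> (\<Sum>\<^sub>\<infinity>n. (cmod (cinner f (h n)))\<^sup>2) \<and>
          (\<Sum>\<^sub>\<infinity>n. (cmod (cinner f (h n)))\<^sup>2) \<le> B * (norm f)\<^sup>2)"

definition is_frame :: "(int \<Rightarrow> 'a::chilbert) \<Rightarrow> bool" where
  "is_frame h \<longleftrightarrow> (\<exists>A B. frame h A B)"

definition frame_op :: "(int \<Rightarrow> 'a::chilbert) \<Rightarrow> 'a \<Rightarrow> 'a" where
  "frame_op h f = (\<Sum>\<^sub>\<infinity>n. cinner f (h n) *\<^sub>C h n)"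

definition canonical_dual :: "(int \<Rightarrow> 'a::chilbert) \<Rightarrow> int \<Rightarrow> 'a" where
  "canonical_dual h x = (THE y. frame_op h y = h x)"

definition weight :: "real \<Rightarrow> int \<Rightarrow> real" where
  "weight s x = (1 + real_of_int \<bar>x\<bar>) powr s"

definition in_schur :: "real \<Rightarrow> (int \<Rightarrow> int \<Rightarrow> complex) \<Rightarrow> bool" where
  "in_schur s M \<longleftrightarrow>
     (\<forall>k. (\<lambda>l. cmod (M k l) * weight s (k - l)) summable_on UNIV) \<and>
     (\<forall>l. (\<lambda>k. cmod (M k l) * weight s (k - l)) summable_on UNIV) \<and>
     bdd_above (range (\<lambda>k. \<Sum>\<^sub>\<infinity>l. cmod (M k l) * weight s (k - l))) \<and>
     bdd_above (range (\<lambda>l. \<Sum>\<^sub>\<infinity>k. cmod (M k l) * weight s (k - l)))"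

definition schur_norm :: "real \<Rightarrow> (int \<Rightarrow> int \<Rightarrow> complex) \<Rightarrow> real" where
  "schur_norm s M = max (SUP k. \<Sum>\<^sub>\<infinity>l. cmod (M k l) * weight s (k - l))
                        (SUP l. \<Sum>\<^sub>\<infinity>k. cmod (M k l) * weight s (k - l))"

definition gramian :: "(int \<Rightarrow> 'a::chilbert) \<Rightarrow> int \<Rightarrow> int \<Rightarrow> complex" where
  "gramian g x y = cinner (g x) (g y)"

definition Hp_norm_le :: "(int \<Rightarrow> 'a::chilbert) \<Rightarrow> real \<Rightarrow> 'a \<Rightarrow> real \<Rightarrow> bool" where
  "Hp_norm_le g p h r \<longleftrightarrow>
     (\<lambda>x. cmod (cinner h (canonical_dual g x)) powr p) summable_on UNIV \<and>
     (\<Sum>\<^sub>\<infinity>x. cmod (cinner h (canonical_dual g x)) powr p) powr (1 / p) \<le> r"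

definition Hinf_norm :: "(int \<Rightarrow> 'a::chilbert) \<Rightarrow> 'a \<Rightarrow> real" where
  "Hinf_norm g h = (SUP x. cmod (cinner h (canonical_dual g x)))"

end

theory Submission
  imports Defs
begin

(*
  Write d\<^sub>n = e\<^sub>n - f\<^sub>n and \<gamma>\<^sub>x = S\<^sup>-\<^sup>1 g\<^sub>x for the canonical dual frame. The matrix
  (\<langle>d\<^sub>n, \<gamma>\<^sub>x\<rangle>)\<^sub>x\<^sub>,\<^sub>n has row sums at most \<epsilon> by (ii) and column sums \<parallel>d\<^sub>n\<parallel>\<^bsub>H\<^sup>1\<^esub> \<le> \<epsilon>, so by
  the Schur test the dual coefficients of h = \<Sum>\<^sub>n c\<^sub>n d\<^sub>n have \<ell>\<^sup>2-norm at most \<epsilon> \<parallel>c\<parallel>.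
  Expanding h = \<Sum>\<^sub>x \<langle>h, \<gamma>\<^sub>x\<rangle> g\<^sub>x and applying the Schur test to the Gramian turns this
  into \<parallel>h\<parallel> \<le> \<surd>\<parallel>A(\<G>,\<G>)\<parallel> \<epsilon> \<parallel>c\<parallel>, which is (iii); (i) implies (ii) by termwise domination.
  A sequence whose synthesis operator has norm K < \<surd>A perturbs a frame with lower bound A
  into a frame with lower bound (\<surd>A - K)\<^sup>2, by the triangle inequality in \<ell>\<^sup>2.

  The expansion needs the frame operator S to be invertible: I - S/B is positive and
  self-adjoint with \<langle>(I - S/B) x, x\<rangle> \<le> (1 - A/B) \<parallel>x\<parallel>\<^sup>2, hence a contraction, so S u = h
  is solved by Banach's fixed point theorem.
*)

section \<open>Complex Hilbert spaces\<close>

lemma quadratic_nonneg_imp_discrim_le: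
  fixes a b c :: real
  assumes nonneg: "\<And>t. 0 \<le> a + 2 * b * t + c * t\<^sup>2" and "0 \<le> c"
  shows "b\<^sup>2 \<le> a * c"
proof (cases "c = 0")
  case True
  have "b = 0"
  proof (rule ccontr)
    assume "b \<noteq> 0"
    then show False using nonneg[of "- (a + 1) / (2 * b)"] True by (simp add: field_simps)
  qed
  then show ?thesis using True by simp
next
  case False
  have "0 \<le> a + 2 * b * (- b / c) + c * (- b / c)\<^sup>2" by (rule nonneg)
  also have "\<dots> = a - b\<^sup>2 / c" using False by (simp add: field_simps power2_eq_square)
  finally show ?thesis using False \<open>0 \<le> c\<close> by (simp add: field_simps)
qed

lemma hermitian_form_Cauchy_Schwarz:
  fixes Q :: "'a::chilbert \<Rightarrow> 'a \<Rightarrow> complex"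
  assumes add: "\<And>x y z. Q (x + y) z = Q x z + Q y z"
    and scaleC: "\<And>a x z. Q (a *\<^sub>C x) z = a * Q x z"
    and hermitian: "\<And>x y. Q x y = cnj (Q y x)"
    and pos: "\<And>x. 0 \<le> Re (Q x x)"
  shows "(cmod (Q x y))\<^sup>2 \<le> Re (Q x x) * Re (Q y y)"
proof -
  have add_right: "Q z (x + y) = Q z x + Q z y" for x y z
    by (metis add hermitian complex_cnj_add)
  have scaleC_right: "Q z (a *\<^sub>C x) = cnj a * Q z x" for a x z
    by (metis scaleC hermitian complex_cnj_mult)
  define n where "n = (cmod (Q x y))\<^sup>2"
  have n: "Q x y * cnj (Q x y) = of_real n"
    unfolding n_def by (rule complex_norm_square[symmetric])
  have "0 \<le> Re (Q x x) + 2 * (- n) * t + (n * Re (Q y y)) * t\<^sup>2" for t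
  proof -
    \<comment> \<open>expand the form at \<open>x - t \<langle>x,y\<rangle> y\<close>\<close>
    define c where "c = - (of_real t * Q x y)"
    have "Q (x + c *\<^sub>C y) (x + c *\<^sub>C y) = Q x x + cnj c * Q x y + c * cnj (Q x y) + c * cnj c * Q y y"
      by (simp add: add add_right scaleC scaleC_right hermitian[of y x] algebra_simps)
    also have "\<dots> = Q x x - 2 * of_real (t * n) + of_real (t\<^sup>2 * n) * Q y y"
      by (simp add: c_def algebra_simps power2_eq_square n mult.left_commute[of _ "cnj (Q x y)"])
    finally show ?thesis using pos[of "x + c *\<^sub>C y"] by (simp add: mult_ac)
  qed
  then have "(- n)\<^sup>2 \<le> Re (Q x x) * (n * Re (Q y y))"
    by (rule quadratic_nonneg_imp_discrim_le) (simp add: n_def pos)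
  then have "n \<le> Re (Q x x) * Re (Q y y)"
    by (cases "n = 0") (auto simp: n_def power2_eq_square pos mult_le_cancel_left mult.left_commute)
  then show ?thesis by (simp add: n_def)
qed

interpretation scaleC: module "scaleC :: complex \<Rightarrow> 'a \<Rightarrow> 'a::chilbert"
  by standard (simp_all add: scaleC_add_right scaleC_add_left scaleC_scaleC scaleC_one)

lemma cinner_scaleC_right: "cinner x (a *\<^sub>C y) = cnj a * cinner x y"
  by (metis cinner_commute cinner_scaleC_left complex_cnj_mult complex_cnj_cnj)

lemma Re_cinner_self: "Re (cinner x x) = (norm x)\<^sup>2"
  by (simp add: cinner_self)

lemma cinner_Cauchy_Schwarz: "cmod (cinner x y) \<le> norm x * norm y"
proof -
  have "(cmod (cinner x y))\<^sup>2 \<le> (norm x * norm y)\<^sup>2"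
    using hermitian_form_Cauchy_Schwarz[of cinner x y, OF cinner_add_left cinner_scaleC_left cinner_commute]
    by (simp add: Re_cinner_self power_mult_distrib)
  then show ?thesis by (rule power2_le_imp_le) simp
qed

interpretation cinner: bounded_bilinear "cinner :: 'a::chilbert \<Rightarrow> 'a \<Rightarrow> complex"
proof
  fix a a' b b' :: 'a and r :: real
  show "cinner (a + a') b = cinner a b + cinner a' b" by (rule cinner_add_left)
  show "cinner a (b + b') = cinner a b + cinner a b'"
    by (metis cinner_add_left cinner_commute complex_cnj_add)
  show "cinner (r *\<^sub>R a) b = r *\<^sub>R cinner a b"
    by (simp add: scaleR_scaleC cinner_scaleC_left scaleR_conv_of_real)
  show "cinner a (r *\<^sub>R b) = r *\<^sub>R cinner a b"
    by (simp add: scaleR_scaleC cinner_scaleC_right scaleR_conv_of_real)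
  show "\<exists>K. \<forall>a b::'a. norm (cinner a b) \<le> norm a * norm b * K"
    using cinner_Cauchy_Schwarz by (metis mult.right_neutral)
qed

lemma norm_scaleC: "norm (a *\<^sub>C x) = cmod a * norm x"
proof -
  have "cinner (a *\<^sub>C x) (a *\<^sub>C x) = a * cnj a * cinner x x"
    by (simp add: cinner_scaleC_left cinner_scaleC_right mult.assoc)
  then have "(norm (a *\<^sub>C x))\<^sup>2 = Re (a * cnj a * cinner x x)"
    by (metis Re_cinner_self)
  also have "\<dots> = (cmod a * norm x)\<^sup>2"
    by (simp add: complex_mult_cnj cinner_self power_mult_distrib cmod_power2 del: of_real_power)
  finally show ?thesis by simp
qed

lemma bounded_linear_scaleC_right: "bounded_linear (scaleC a :: 'a::chilbert \<Rightarrow> 'a)"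
proof (rule bounded_linear_intro[where K = "cmod a"])
  fix x y :: 'a and r :: real
  show "a *\<^sub>C (x + y) = a *\<^sub>C x + a *\<^sub>C y" by (rule scaleC_add_right)
  show "a *\<^sub>C (r *\<^sub>R x) = r *\<^sub>R (a *\<^sub>C x)" by (simp add: scaleR_scaleC scaleC_scaleC mult.commute)
  show "norm (a *\<^sub>C x) \<le> norm x * cmod a" by (simp add: norm_scaleC mult.commute)
qed

lemma synthesis_bound_if_analysis_bound:
  fixes h :: "'i \<Rightarrow> 'a::chilbert"
  assumes "0 \<le> K"
    and analysis: "\<And>y. (\<Sum>n\<in>F. (cmod (cinner y (h n)))\<^sup>2) \<le> (K * norm y)\<^sup>2"
  shows "norm (\<Sum>n\<in>F. c n *\<^sub>C h n) \<le> K * sqrt (\<Sum>n\<in>F. (cmod (c n))\<^sup>2)"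
proof -
  define v where "v = (\<Sum>n\<in>F. c n *\<^sub>C h n)"
  have "L2_set (\<lambda>n. cmod (cinner v (h n))) F \<le> sqrt ((K * norm v)\<^sup>2)"
    unfolding L2_set_def using analysis by (rule real_sqrt_le_mono)
  then have analysis_v: "L2_set (\<lambda>n. cmod (cinner v (h n))) F \<le> K * norm v"
    using \<open>0 \<le> K\<close> by simp
  have "(norm v)\<^sup>2 = Re (\<Sum>n\<in>F. c n * cinner (h n) v)"
    by (simp add: Re_cinner_self[symmetric] v_def cinner.sum_left cinner_scaleC_left)
  also have "\<dots> \<le> cmod (\<Sum>n\<in>F. c n * cinner (h n) v)"
    by (rule complex_Re_le_cmod)
  also have "\<dots> \<le> (\<Sum>n\<in>F. cmod (c n * cinner (h n) v))"
    by (rule norm_sum)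
  also have "\<dots> = (\<Sum>n\<in>F. \<bar>cmod (c n)\<bar> * \<bar>cmod (cinner v (h n))\<bar>)"
    by (simp add: norm_mult cinner_commute[of "h _" v])
  also have "\<dots> \<le> L2_set (\<lambda>n. cmod (c n)) F * L2_set (\<lambda>n. cmod (cinner v (h n))) F"
    by (rule L2_set_mult_ineq)
  also have "\<dots> \<le> L2_set (\<lambda>n. cmod (c n)) F * (K * norm v)"
    using analysis_v by (rule mult_left_mono) simp
  finally have "norm v * norm v \<le> (K * L2_set (\<lambda>n. cmod (c n)) F) * norm v"
    by (simp add: power2_eq_square mult_ac)
  then have "norm v \<le> K * L2_set (\<lambda>n. cmod (c n)) F"
    using \<open>0 \<le> K\<close> by (cases "norm v = 0") auto
  then show ?thesis by (simp add: v_def L2_set_def)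
qed

lemma analysis_bound_if_synthesis_bound:
  fixes h :: "'i \<Rightarrow> 'a::chilbert"
  assumes synthesis: "\<And>c. norm (\<Sum>n\<in>F. c n *\<^sub>C h n) \<le> K * sqrt (\<Sum>n\<in>F. (cmod (c n))\<^sup>2)"
  shows "(\<Sum>n\<in>F. (cmod (cinner y (h n)))\<^sup>2) \<le> (K * norm y)\<^sup>2"
proof -
  define c where "c n = cinner y (h n)" for n
  define s where "s = (\<Sum>n\<in>F. (cmod (c n))\<^sup>2)"
  have "0 \<le> s" by (simp add: s_def sum_nonneg)
  \<comment> \<open>test the synthesis bound against the analysis coefficients of \<open>y\<close> themselves\<close>
  have "cinner y (\<Sum>n\<in>F. c n *\<^sub>C h n) = (\<Sum>n\<in>F. c n * cnj (c n))"
    by (simp add: c_def cinner.sum_right cinner_scaleC_right mult.commute)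
  also have "\<dots> = of_real s"
    unfolding s_def of_real_sum complex_norm_square ..
  finally have "s \<le> cmod (cinner y (\<Sum>n\<in>F. c n *\<^sub>C h n))"
    by simp
  also have "\<dots> \<le> norm y * norm (\<Sum>n\<in>F. c n *\<^sub>C h n)"
    by (rule cinner_Cauchy_Schwarz)
  also have "\<dots> \<le> norm y * (K * sqrt s)"
    unfolding s_def by (intro mult_left_mono synthesis) simp
  finally have le: "s \<le> K * norm y * sqrt s"
    by (simp add: mult_ac)
  have "s \<le> (K * norm y)\<^sup>2"
  proof (cases "s = 0")
    case False
    have "sqrt s * sqrt s \<le> K * norm y * sqrt s"
      using le \<open>0 \<le> s\<close> by simp
    moreover have "0 < sqrt s"
      using False \<open>0 \<le> s\<close> by simp
    ultimately have "sqrt s \<le> K * norm y"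
      by (rule mult_right_le_imp_le)
    then show ?thesis
      using power_mono[of "sqrt s" "K * norm y" 2] \<open>0 \<le> s\<close> by simp
  qed simp
  then show ?thesis by (simp add: s_def c_def)
qed

lemma L2_set_cinner_add_le:
  "L2_set (\<lambda>n. cmod (cinner y (u n + v n))) F
    \<le> L2_set (\<lambda>n. cmod (cinner y (u n))) F + L2_set (\<lambda>n. cmod (cinner y (v n))) F"
proof -
  have "L2_set (\<lambda>n. cmod (cinner y (u n + v n))) F
      \<le> L2_set (\<lambda>n. cmod (cinner y (u n)) + cmod (cinner y (v n))) F"
    by (rule L2_set_mono) (simp_all add: cinner.add_right norm_triangle_ineq)
  also have "\<dots> \<le> L2_set (\<lambda>n. cmod (cinner y (u n))) F + L2_set (\<lambda>n. cmod (cinner y (v n))) F"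
    by (rule L2_set_triangle_ineq)
  finally show ?thesis .
qed

section \<open>Unconditional summation\<close>

lemma summable_on_if_tails_small:
  fixes f :: "'i \<Rightarrow> 'b::banach"
  assumes tails: "\<And>e. 0 < e \<Longrightarrow>
      \<exists>F0. finite F0 \<and> F0 \<subseteq> A \<and> (\<forall>F. finite F \<and> F \<subseteq> A - F0 \<longrightarrow> norm (sum f F) < e)"
  shows "f summable_on A"
proof -
  have "\<exists>P. eventually P (finite_subsets_at_top A) \<and> (\<forall>F F'. P F \<and> P F' \<longrightarrow> dist (sum f F) (sum f F') < e)"
    if "0 < e" for e
  proof -
    obtain F0 where F0: "finite F0" "F0 \<subseteq> A"
      and small: "\<And>F. finite F \<Longrightarrow> F \<subseteq> A - F0 \<Longrightarrow> norm (sum f F) < e / 2"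
      using tails[of "e / 2"] \<open>0 < e\<close> by auto
    define P where "P F \<longleftrightarrow> finite F \<and> F0 \<subseteq> F \<and> F \<subseteq> A" for F
    have "eventually P (finite_subsets_at_top A)"
      unfolding P_def eventually_finite_subsets_at_top using F0 by blast
    moreover have "dist (sum f F) (sum f F') < e" if "P F" "P F'" for F F'
    proof -
      \<comment> \<open>the common part \<open>F \<inter> F'\<close> cancels, and both remainders avoid \<open>F0\<close>\<close>
      have "finite F" "finite F'" using that unfolding P_def by auto
      then have "sum f F - sum f F' = sum f (F - F') - sum f (F' - F)"
        using sum.Int_Diff[of F f F'] sum.Int_Diff[of F' f F] by (simp add: Int_commute)
      moreover have "norm (sum f (F - F')) < e / 2" "norm (sum f (F' - F)) < e / 2"
        using that unfolding P_def by (intro small; auto)+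
      ultimately show ?thesis
        unfolding dist_norm using norm_triangle_ineq4[of "sum f (F - F')" "sum f (F' - F)"] by simp
    qed
    ultimately show ?thesis by blast
  qed
  then have "cauchy_filter (filtermap (sum f) (finite_subsets_at_top A))"
    by (simp add: cauchy_filter_metric_filtermap)
  then obtain L where "(sum f \<longlongrightarrow> L) (finite_subsets_at_top A)"
    using complete_uniform[where S = UNIV] complete_UNIV by (force simp: filterlim_def)
  then show ?thesis
    unfolding summable_on_def has_sum_def by blast
qed

lemma nonneg_summable_on_tails_small:
  fixes w :: "'i \<Rightarrow> real"
  assumes "w summable_on A" "\<And>i. i \<in> A \<Longrightarrow> 0 \<le> w i" "0 < e"
  shows "\<exists>F0. finite F0 \<and> F0 \<subseteq> A \<and> (\<forall>F. finite F \<and> F \<subseteq> A - F0 \<longrightarrow> sum w F < e)"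
proof -
  have "(sum w \<longlongrightarrow> infsum w A) (finite_subsets_at_top A)"
    using has_sum_infsum[OF assms(1)] unfolding has_sum_def .
  then have "eventually (\<lambda>F. dist (sum w F) (infsum w A) < e / 2) (finite_subsets_at_top A)"
    using \<open>0 < e\<close> half_gt_zero unfolding tendsto_iff by blast
  then obtain F0 where F0: "finite F0" "F0 \<subseteq> A"
    and close: "\<forall>F. finite F \<and> F0 \<subseteq> F \<and> F \<subseteq> A \<longrightarrow> dist (sum w F) (infsum w A) < e / 2"
    unfolding eventually_finite_subsets_at_top by blast
  have "sum w F < e" if "finite F" "F \<subseteq> A - F0" for F
  proof -
    have "sum w (F0 \<union> F) = sum w F0 + sum w F"
      by (rule sum.union_disjoint) (use that F0 in auto)
    moreover have "dist (sum w (F0 \<union> F)) (infsum w A) < e / 2" "dist (sum w F0) (infsum w A) < e / 2"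
      using close that F0 by auto
    ultimately show ?thesis unfolding dist_real_def by arith
  qed
  then show ?thesis using F0 by blast
qed

lemma summable_on_if_norm_sum_le_sqrt:
  fixes f :: "'i \<Rightarrow> 'b::banach" and w :: "'i \<Rightarrow> real"
  assumes "w summable_on A" "\<And>i. i \<in> A \<Longrightarrow> 0 \<le> w i" "0 \<le> K"
    and bound: "\<And>F. finite F \<Longrightarrow> F \<subseteq> A \<Longrightarrow> norm (sum f F) \<le> K * sqrt (sum w F)"
  shows "f summable_on A"
proof (rule summable_on_if_tails_small)
  fix e :: real assume "0 < e"
  define \<delta> where "\<delta> = (e / (K + 1))\<^sup>2"
  have "sqrt \<delta> = e / (K + 1)"
    using \<open>0 < e\<close> \<open>0 \<le> K\<close> by (simp add: \<delta>_def)
  have "K * sqrt \<delta> < e"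
    unfolding \<open>sqrt \<delta> = e / (K + 1)\<close> using \<open>0 < e\<close> \<open>0 \<le> K\<close> by (simp add: field_simps)
  have "0 < \<delta>"
    using \<open>0 < e\<close> \<open>0 \<le> K\<close> by (simp add: \<delta>_def)
  then obtain F0 where F0: "finite F0" "F0 \<subseteq> A"
    and small: "\<forall>F. finite F \<and> F \<subseteq> A - F0 \<longrightarrow> sum w F < \<delta>"
    using nonneg_summable_on_tails_small[OF assms(1,2)] by metis
  have "norm (sum f F) < e" if "finite F" "F \<subseteq> A - F0" for F
  proof -
    have "sum w F < \<delta>"
      using small that by blast
    have "norm (sum f F) \<le> K * sqrt (sum w F)"
      using that by (intro bound) auto
    also have "\<dots> \<le> K * sqrt \<delta>"
      using \<open>sum w F < \<delta>\<close> \<open>0 \<le> K\<close> by (simp add: mult_left_mono)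
    finally show ?thesis using \<open>K * sqrt \<delta> < e\<close> by linarith
  qed
  then have "\<forall>F. finite F \<and> F \<subseteq> A - F0 \<longrightarrow> norm (sum f F) < e" by blast
  with F0 show "\<exists>F0. finite F0 \<and> F0 \<subseteq> A \<and> (\<forall>F. finite F \<and> F \<subseteq> A - F0 \<longrightarrow> norm (sum f F) < e)"
    by blast
qed

lemma square_summable_if_L2_set_le:
  fixes u :: "'i \<Rightarrow> real"
  assumes bound: "\<And>F. finite F \<Longrightarrow> L2_set u F \<le> b"
  shows "(\<lambda>n. (u n)\<^sup>2) summable_on UNIV" "(\<Sum>\<^sub>\<infinity>n. (u n)\<^sup>2) \<le> b\<^sup>2"
proof -
  have "0 \<le> b" using bound[of "{}"] by simp
  have sums: "(\<Sum>n\<in>F. (u n)\<^sup>2) \<le> b\<^sup>2" if "finite F" for F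
  proof -
    have "(L2_set u F)\<^sup>2 \<le> b\<^sup>2"
      using bound[OF that] by (intro power_mono) simp_all
    then show ?thesis by (simp add: L2_set_def sum_nonneg)
  qed
  show "(\<lambda>n. (u n)\<^sup>2) summable_on UNIV"
    by (rule nonneg_bdd_above_summable_on) (auto intro!: bdd_aboveI[of _ "b\<^sup>2"] sums)
  then show "(\<Sum>\<^sub>\<infinity>n. (u n)\<^sup>2) \<le> b\<^sup>2"
    by (rule infsum_le_finite_sums) (rule sums)
qed

lemma L2_set_le_sqrt_infsum:
  fixes u :: "'i \<Rightarrow> real"
  assumes "(\<lambda>n. (u n)\<^sup>2) summable_on UNIV" "finite F"
  shows "L2_set u F \<le> sqrt (\<Sum>\<^sub>\<infinity>n. (u n)\<^sup>2)"
  unfolding L2_set_def using assms by (intro real_sqrt_le_mono finite_sum_le_infsum) auto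

section \<open>The Schur test\<close>

lemma weighted_sum_squared_le:
  fixes K u :: "'j \<Rightarrow> real"
  assumes "\<And>y. y \<in> Y \<Longrightarrow> 0 \<le> K y"
  shows "(\<Sum>y\<in>Y. K y * \<bar>u y\<bar>)\<^sup>2 \<le> (\<Sum>y\<in>Y. K y) * (\<Sum>y\<in>Y. K y * (u y)\<^sup>2)"
proof -
  have "(\<Sum>y\<in>Y. K y * \<bar>u y\<bar>) = (\<Sum>y\<in>Y. \<bar>sqrt (K y)\<bar> * \<bar>sqrt (K y) * u y\<bar>)"
    using assms by (intro sum.cong) (auto simp: abs_mult real_sqrt_mult[symmetric])
  also have "\<dots> \<le> L2_set (\<lambda>y. sqrt (K y)) Y * L2_set (\<lambda>y. sqrt (K y) * u y) Y"
    by (rule L2_set_mult_ineq)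
  finally have "(\<Sum>y\<in>Y. K y * \<bar>u y\<bar>)\<^sup>2 \<le> (L2_set (\<lambda>y. sqrt (K y)) Y * L2_set (\<lambda>y. sqrt (K y) * u y) Y)\<^sup>2"
    by (rule power_mono) (use assms in \<open>auto intro!: sum_nonneg\<close>)
  also have "\<dots> = (\<Sum>y\<in>Y. K y) * (\<Sum>y\<in>Y. K y * (u y)\<^sup>2)"
    using assms by (simp add: L2_set_def sum_nonneg power_mult_distrib)
  finally show ?thesis .
qed

lemma sum_Schur_test:
  fixes K :: "'i \<Rightarrow> 'j \<Rightarrow> real"
  assumes "\<And>x y. x \<in> X \<Longrightarrow> y \<in> Y \<Longrightarrow> 0 \<le> K x y" "0 \<le> R"
    and rows: "\<And>x. x \<in> X \<Longrightarrow> (\<Sum>y\<in>Y. K x y) \<le> R"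
    and cols: "\<And>y. y \<in> Y \<Longrightarrow> (\<Sum>x\<in>X. K x y) \<le> C"
  shows "(\<Sum>x\<in>X. (\<Sum>y\<in>Y. K x y * \<bar>u y\<bar>)\<^sup>2) \<le> R * C * (\<Sum>y\<in>Y. (u y)\<^sup>2)"
proof -
  have "(\<Sum>x\<in>X. (\<Sum>y\<in>Y. K x y * \<bar>u y\<bar>)\<^sup>2) \<le> (\<Sum>x\<in>X. R * (\<Sum>y\<in>Y. K x y * (u y)\<^sup>2))"
  proof (rule sum_mono)
    fix x assume "x \<in> X"
    have "(\<Sum>y\<in>Y. K x y * \<bar>u y\<bar>)\<^sup>2 \<le> (\<Sum>y\<in>Y. K x y) * (\<Sum>y\<in>Y. K x y * (u y)\<^sup>2)"
      using assms(1) \<open>x \<in> X\<close> by (intro weighted_sum_squared_le)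
    also have "\<dots> \<le> R * (\<Sum>y\<in>Y. K x y * (u y)\<^sup>2)"
      using assms(1) \<open>x \<in> X\<close> rows by (intro mult_right_mono sum_nonneg) auto
    finally show "(\<Sum>y\<in>Y. K x y * \<bar>u y\<bar>)\<^sup>2 \<le> R * (\<Sum>y\<in>Y. K x y * (u y)\<^sup>2)" .
  qed
  also have "\<dots> = R * (\<Sum>y\<in>Y. (u y)\<^sup>2 * (\<Sum>x\<in>X. K x y))"
    by (simp add: sum_distrib_left sum_distrib_right sum.swap[of _ X] mult_ac)
  also have "\<dots> \<le> R * (\<Sum>y\<in>Y. (u y)\<^sup>2 * C)"
    using cols \<open>0 \<le> R\<close> by (intro mult_left_mono sum_mono) auto
  finally show ?thesis by (simp add: sum_distrib_left sum_distrib_right mult_ac)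
qed

definition schur_bounded :: "('i \<Rightarrow> 'j \<Rightarrow> complex) \<Rightarrow> real \<Rightarrow> bool" where
  "schur_bounded M C \<longleftrightarrow>
     (\<forall>i. (\<lambda>j. cmod (M i j)) summable_on UNIV \<and> (\<Sum>\<^sub>\<infinity>j. cmod (M i j)) \<le> C) \<and>
     (\<forall>j. (\<lambda>i. cmod (M i j)) summable_on UNIV \<and> (\<Sum>\<^sub>\<infinity>i. cmod (M i j)) \<le> C)"

lemma schur_bounded_row_sum_le:
  assumes "schur_bounded M C" "finite J"
  shows "(\<Sum>j\<in>J. cmod (M i j)) \<le> C"
  using assms unfolding schur_bounded_def
  by (meson finite_sum_le_infsum norm_ge_zero order_trans subset_UNIV)

lemma schur_bounded_col_sum_le:
  assumes "schur_bounded M C" "finite I"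
  shows "(\<Sum>i\<in>I. cmod (M i j)) \<le> C"
  using assms unfolding schur_bounded_def
  by (meson finite_sum_le_infsum norm_ge_zero order_trans subset_UNIV)

lemma schur_bounded_nonneg: "schur_bounded M C \<Longrightarrow> 0 \<le> C"
  using schur_bounded_row_sum_le[of M C "{}"] by simp

lemma schur_bounded_Schur_test:
  assumes "schur_bounded M C" "finite X" "finite Y"
  shows "(\<Sum>x\<in>X. (\<Sum>y\<in>Y. cmod (M x y) * \<bar>u y\<bar>)\<^sup>2) \<le> C\<^sup>2 * (\<Sum>y\<in>Y. (u y)\<^sup>2)"
proof -
  have "(\<Sum>x\<in>X. (\<Sum>y\<in>Y. cmod (M x y) * \<bar>u y\<bar>)\<^sup>2) \<le> C * C * (\<Sum>y\<in>Y. (u y)\<^sup>2)"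
    by (rule sum_Schur_test)
      (use assms in \<open>auto intro: schur_bounded_nonneg schur_bounded_row_sum_le schur_bounded_col_sum_le\<close>)
  then show ?thesis by (simp add: power2_eq_square)
qed

section \<open>Frames and the frame operator\<close>

lemma frameD:
  assumes "frame g A B"
  shows "0 < A" "A \<le> B" "(\<lambda>n. (cmod (cinner y (g n)))\<^sup>2) summable_on UNIV"
    and "A * (norm y)\<^sup>2 \<le> (\<Sum>\<^sub>\<infinity>n. (cmod (cinner y (g n)))\<^sup>2)"
    and "(\<Sum>\<^sub>\<infinity>n. (cmod (cinner y (g n)))\<^sup>2) \<le> B * (norm y)\<^sup>2"
  using assms unfolding frame_def by auto

context
  fixes g :: "int \<Rightarrow> 'a::chilbert" and A B :: real
  assumes frame: "frame g A B"
begin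

lemma frame_analysis_bound:
  assumes "finite F"
  shows "(\<Sum>n\<in>F. (cmod (cinner y (g n)))\<^sup>2) \<le> B * (norm y)\<^sup>2"
proof -
  have "(\<Sum>n\<in>F. (cmod (cinner y (g n)))\<^sup>2) \<le> (\<Sum>\<^sub>\<infinity>n. (cmod (cinner y (g n)))\<^sup>2)"
    by (rule finite_sum_le_infsum[OF frameD(3)[OF frame]]) (use assms in auto)
  also have "\<dots> \<le> B * (norm y)\<^sup>2"
    by (rule frameD(5)[OF frame])
  finally show ?thesis .
qed

lemma frame_analysis_L2_set_le:
  assumes "finite F"
  shows "L2_set (\<lambda>n. cmod (cinner y (g n))) F \<le> sqrt B * norm y"
  using real_sqrt_le_mono[OF frame_analysis_bound[OF assms, of y]]
  by (simp add: L2_set_def real_sqrt_mult)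

lemma frame_synthesis_bound:
  "norm (\<Sum>n\<in>F. c n *\<^sub>C g n) \<le> sqrt B * sqrt (\<Sum>n\<in>F. (cmod (c n))\<^sup>2)"
proof (cases "finite F")
  case True
  show ?thesis
  proof (rule synthesis_bound_if_analysis_bound)
    show "0 \<le> sqrt B" using frameD(1,2)[OF frame] by simp
    show "(\<Sum>n\<in>F. (cmod (cinner y (g n)))\<^sup>2) \<le> (sqrt B * norm y)\<^sup>2" for y
      using frame_analysis_bound[OF True, of y] frameD(1,2)[OF frame] by (simp add: power_mult_distrib)
  qed
qed simp

lemma frame_op_has_sum: "((\<lambda>n. cinner y (g n) *\<^sub>C g n) has_sum frame_op g y) UNIV"
proof -
  have "(\<lambda>n. cinner y (g n) *\<^sub>C g n) summable_on UNIV"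
    by (rule summable_on_if_norm_sum_le_sqrt[OF frameD(3)[OF frame], where K = "sqrt B"])
      (use frame_synthesis_bound frameD(1,2)[OF frame] in auto)
  then show ?thesis
    unfolding frame_op_def by (rule has_sum_infsum)
qed

lemma cinner_frame_op_has_sum:
  "((\<lambda>n. cinner y (g n) * cinner (g n) z) has_sum cinner (frame_op g y) z) UNIV"
  using has_sum_bounded_linear[OF cinner.bounded_linear_left[of z] frame_op_has_sum[of y]]
  by (simp add: cinner_scaleC_left)

lemma cinner_frame_op_self:
  "cinner (frame_op g y) y = of_real (\<Sum>\<^sub>\<infinity>n. (cmod (cinner y (g n)))\<^sup>2)"
proof -
  have "cinner y (g n) * cinner (g n) y = of_real ((cmod (cinner y (g n)))\<^sup>2)" for n
    unfolding cinner_commute[of "g n" y] complex_norm_square ..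
  then have "((\<lambda>n. of_real ((cmod (cinner y (g n)))\<^sup>2)) has_sum cinner (frame_op g y) y) UNIV"
    using cinner_frame_op_has_sum[of y y] by simp
  moreover have "((\<lambda>n. of_real ((cmod (cinner y (g n)))\<^sup>2) :: complex) has_sum
      of_real (\<Sum>\<^sub>\<infinity>n. (cmod (cinner y (g n)))\<^sup>2)) UNIV"
    using frameD(3)[OF frame] by (intro has_sum_of_real has_sum_infsum)
  ultimately show ?thesis by (rule has_sum_unique)
qed

lemma frame_op_adjoint: "cinner (frame_op g y) z = cinner y (frame_op g z)"
proof -
  have "((\<lambda>n. cnj (cinner z (g n) * cinner (g n) y)) has_sum cnj (cinner (frame_op g z) y)) UNIV"
    using cinner_frame_op_has_sum[of z y] by (simp only: has_sum_cnj_iff)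
  moreover have "cnj (cinner z (g n) * cinner (g n) y) = cinner y (g n) * cinner (g n) z" for n
    by (simp add: cinner_commute[of z "g n"] cinner_commute[of "g n" y])
  ultimately have "((\<lambda>n. cinner y (g n) * cinner (g n) z) has_sum cinner y (frame_op g z)) UNIV"
    by (simp add: cinner_commute[of y "frame_op g z"])
  with cinner_frame_op_has_sum[of y z] show ?thesis
    by (rule has_sum_unique)
qed

lemma frame_op_add: "frame_op g (x + y) = frame_op g x + frame_op g y"
proof -
  have "((\<lambda>n. cinner (x + y) (g n) *\<^sub>C g n) has_sum frame_op g x + frame_op g y) UNIV"
    using has_sum_add[OF frame_op_has_sum[of x] frame_op_has_sum[of y]]
    by (simp add: cinner.add_left scaleC_add_left)
  with frame_op_has_sum[of "x + y"] show ?thesis by (rule has_sum_unique)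
qed

lemma frame_op_scaleC: "frame_op g (a *\<^sub>C x) = a *\<^sub>C frame_op g x"
proof -
  have "((\<lambda>n. cinner (a *\<^sub>C x) (g n) *\<^sub>C g n) has_sum a *\<^sub>C frame_op g x) UNIV"
    using has_sum_bounded_linear[OF bounded_linear_scaleC_right frame_op_has_sum, of a x]
    by (simp add: cinner_scaleC_left scaleC_scaleC)
  with frame_op_has_sum[of "a *\<^sub>C x"] show ?thesis by (rule has_sum_unique)
qed

lemma frame_op_diff: "frame_op g (x - y) = frame_op g x - frame_op g y"
  using frame_op_add[of "x - y" y] by (simp add: algebra_simps)

lemma Re_cinner_frame_op_bounds:
  "A * (norm y)\<^sup>2 \<le> Re (cinner (frame_op g y) y)" "Re (cinner (frame_op g y) y) \<le> B * (norm y)\<^sup>2"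
  using frameD(4,5)[OF frame] by (simp_all add: cinner_frame_op_self)

lemma frame_op_residual_contraction:
  "norm (x - (1 / B) *\<^sub>R frame_op g x) \<le> (1 - A / B) * norm x"
proof -
  define R where "R y = y - (1 / B) *\<^sub>R frame_op g y" for y
  define q where "q = 1 - A / B"
  have "0 < A" "A \<le> B" using frameD(1,2)[OF frame] by auto
  then have "0 \<le> q" by (simp add: q_def)
  have Re_R: "Re (cinner (R y) y) = (norm y)\<^sup>2 - Re (cinner (frame_op g y) y) / B" for y
    by (simp add: R_def cinner.diff_left cinner.scaleR_left Re_cinner_self)
  have R_pos: "0 \<le> Re (cinner (R y) y)" and R_le: "Re (cinner (R y) y) \<le> q * (norm y)\<^sup>2" for y
    using Re_cinner_frame_op_bounds[of y] \<open>0 < A\<close> \<open>A \<le> B\<close>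
    by (auto simp: Re_R q_def field_simps)
  have R_add: "R (y + y') = R y + R y'" for y y'
    by (simp add: R_def frame_op_add algebra_simps)
  have R_scaleC: "R (a *\<^sub>C y) = a *\<^sub>C R y" for a y
    by (simp add: R_def frame_op_scaleC scaleC.scale_right_diff_distrib
        scaleR_scaleC mult.commute)
  have "(cmod (cinner (R x) (R x)))\<^sup>2 \<le> Re (cinner (R x) x) * Re (cinner (R (R x)) (R x))"
  proof (rule hermitian_form_Cauchy_Schwarz[where Q = "\<lambda>y z. cinner (R y) z"])
    show "cinner (R (y + y')) z = cinner (R y) z + cinner (R y') z" for y y' z
      by (simp add: R_add cinner.add_left)
    show "cinner (R (a *\<^sub>C y)) z = a * cinner (R y) z" for a y z
      by (simp add: R_scaleC cinner_scaleC_left)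
    show "cinner (R y) z = cnj (cinner (R z) y)" for y z
      by (simp add: R_def cinner.diff_left cinner.scaleR_left frame_op_adjoint
          cinner_commute[of y z] cinner_commute[of y "frame_op g z"])
  qed (rule R_pos)
  also have "\<dots> \<le> (q * (norm x)\<^sup>2) * (q * (norm (R x))\<^sup>2)"
    by (intro mult_mono R_le R_pos) (simp add: \<open>0 \<le> q\<close>)
  finally have N: "(norm (R x))\<^sup>2 * (norm (R x))\<^sup>2 \<le> (q * norm x)\<^sup>2 * (norm (R x))\<^sup>2"
    by (simp add: cinner_self norm_power power_mult_distrib power2_eq_square[of q] mult_ac)
  have "(norm (R x))\<^sup>2 \<le> (q * norm x)\<^sup>2"
  proof (cases "R x = 0")
    case False
    then show ?thesis by (intro mult_right_le_imp_le[OF N]) simp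
  qed simp
  then show ?thesis
    using \<open>0 \<le> q\<close> by (simp add: R_def q_def power2_le_iff_abs_le)
qed

lemma frame_op_bij: "\<exists>!u. frame_op g u = h"
proof -
  define T where "T u = u - (1 / B) *\<^sub>R (frame_op g u - h)" for u
  have "0 < A" "A \<le> B" using frameD(1,2)[OF frame] by auto
  have "dist (T u) (T v) \<le> (1 - A / B) * dist u v" for u v
  proof -
    have "T u - T v = (u - v) - (1 / B) *\<^sub>R frame_op g (u - v)"
      by (simp add: T_def frame_op_diff algebra_simps)
    then show ?thesis
      using frame_op_residual_contraction[of "u - v"] by (simp add: dist_norm)
  qed
  then have "\<exists>!u. T u = u"
    using \<open>0 < A\<close> \<open>A \<le> B\<close> by (intro banach_fix_type[where c = "1 - A / B"]) auto
  moreover have "T u = u \<longleftrightarrow> frame_op g u = h" for u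
    using \<open>0 < A\<close> \<open>A \<le> B\<close> by (auto simp: T_def)
  ultimately show ?thesis by simp
qed

lemma frame_op_canonical_dual: "frame_op g (canonical_dual g x) = g x"
  unfolding canonical_dual_def using frame_op_bij by (rule theI')

lemma frame_reconstruction: "((\<lambda>x. cinner h (canonical_dual g x) *\<^sub>C g x) has_sum h) UNIV"
proof -
  obtain u where u: "frame_op g u = h" using frame_op_bij by blast
  have "cinner h (canonical_dual g x) = cinner u (g x)" for x
    unfolding u[symmetric] frame_op_adjoint frame_op_canonical_dual ..
  then show ?thesis
    using frame_op_has_sum[of u] by (simp add: u)
qed

end

section \<open>Localized frames\<close>

lemma gramian_synthesis_bound:
  fixes g :: "int \<Rightarrow> 'a::chilbert"
  assumes gram: "schur_bounded (gramian g) C" and "finite X"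
  shows "(norm (\<Sum>x\<in>X. a x *\<^sub>C g x))\<^sup>2 \<le> C * (\<Sum>x\<in>X. (cmod (a x))\<^sup>2)"
proof -
  define v where "v = (\<Sum>x\<in>X. a x *\<^sub>C g x)"
  define b where "b x = (\<Sum>y\<in>X. cmod (gramian g x y) * \<bar>cmod (a y)\<bar>)" for x
  have "0 \<le> C" using gram by (rule schur_bounded_nonneg)
  have b: "cmod (cinner (g x) v) \<le> b x" for x
  proof -
    have "cinner (g x) v = (\<Sum>y\<in>X. cnj (a y) * gramian g x y)"
      by (simp add: v_def gramian_def cinner.sum_right cinner_scaleC_right)
    then show ?thesis
      using norm_sum[of "\<lambda>y. cnj (a y) * gramian g x y" X] by (simp add: b_def norm_mult mult.commute)
  qed
  have "L2_set b X \<le> sqrt (C\<^sup>2 * (\<Sum>x\<in>X. (cmod (a x))\<^sup>2))"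
    unfolding L2_set_def b_def using schur_bounded_Schur_test[OF gram \<open>finite X\<close> \<open>finite X\<close>]
    by (rule real_sqrt_le_mono)
  also have "\<dots> = C * L2_set (\<lambda>x. cmod (a x)) X"
    using \<open>0 \<le> C\<close> by (simp add: L2_set_def real_sqrt_mult)
  finally have L2_b: "L2_set b X \<le> C * L2_set (\<lambda>x. cmod (a x)) X" .
  have "(norm v)\<^sup>2 = Re (\<Sum>x\<in>X. a x * cinner (g x) v)"
    by (simp add: Re_cinner_self[symmetric] v_def cinner.sum_left cinner_scaleC_left)
  also have "\<dots> \<le> (\<Sum>x\<in>X. cmod (a x * cinner (g x) v))"
    using complex_Re_le_cmod norm_sum order_trans by blast
  also have "\<dots> \<le> (\<Sum>x\<in>X. \<bar>cmod (a x)\<bar> * \<bar>b x\<bar>)"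
    using b by (intro sum_mono) (simp add: norm_mult mult_left_mono b_def sum_nonneg)
  also have "\<dots> \<le> L2_set (\<lambda>x. cmod (a x)) X * L2_set b X"
    by (rule L2_set_mult_ineq)
  also have "\<dots> \<le> L2_set (\<lambda>x. cmod (a x)) X * (C * L2_set (\<lambda>x. cmod (a x)) X)"
    using L2_b by (rule mult_left_mono) simp
  finally show ?thesis
    by (simp add: v_def L2_set_def sum_nonneg power2_eq_square[symmetric] mult_ac)
qed

lemma norm_le_if_dual_coefficients_bounded:
  fixes g :: "int \<Rightarrow> 'a::chilbert"
  assumes frame: "frame g A B" and gram: "schur_bounded (gramian g) C"
    and coeff: "\<And>X. finite X \<Longrightarrow> (\<Sum>x\<in>X. (cmod (cinner h (canonical_dual g x)))\<^sup>2) \<le> S"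
  shows "norm h \<le> sqrt C * sqrt S"
proof -
  define a where "a x = cinner h (canonical_dual g x)" for x
  have "0 \<le> C" using gram by (rule schur_bounded_nonneg)
  have "norm (\<Sum>x\<in>X. a x *\<^sub>C g x) \<le> sqrt C * sqrt S" if "finite X" for X
  proof -
    have "(norm (\<Sum>x\<in>X. a x *\<^sub>C g x))\<^sup>2 \<le> C * (\<Sum>x\<in>X. (cmod (a x))\<^sup>2)"
      by (rule gramian_synthesis_bound[OF gram that])
    also have "\<dots> \<le> C * S"
      using coeff[OF that] \<open>0 \<le> C\<close> by (simp add: a_def mult_left_mono)
    finally show ?thesis
      by (simp add: real_sqrt_mult[symmetric] real_le_rsqrt)
  qed
  moreover have "((\<lambda>X. norm (\<Sum>x\<in>X. a x *\<^sub>C g x)) \<longlongrightarrow> norm h) (finite_subsets_at_top UNIV)"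
    using frame_reconstruction[OF frame, of h] unfolding a_def has_sum_def by (rule tendsto_norm)
  ultimately show ?thesis
    by (intro tendsto_upperbound) auto
qed

lemma coefficients_of_synthesis_bound:
  fixes d :: "'j \<Rightarrow> 'a::chilbert" and e :: "'i \<Rightarrow> 'a"
  assumes M: "schur_bounded (\<lambda>x n. cinner (d n) (e x)) \<epsilon>" and "finite F" "finite X"
  shows "(\<Sum>x\<in>X. (cmod (cinner (\<Sum>n\<in>F. c n *\<^sub>C d n) (e x)))\<^sup>2) \<le> \<epsilon>\<^sup>2 * (\<Sum>n\<in>F. (cmod (c n))\<^sup>2)"
proof -
  have "cmod (cinner (\<Sum>n\<in>F. c n *\<^sub>C d n) (e x)) \<le> (\<Sum>n\<in>F. cmod (cinner (d n) (e x)) * \<bar>cmod (c n)\<bar>)" for x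
    using norm_sum[of "\<lambda>n. c n * cinner (d n) (e x)" F]
    by (simp add: cinner.sum_left cinner_scaleC_left norm_mult mult.commute)
  then have "(\<Sum>x\<in>X. (cmod (cinner (\<Sum>n\<in>F. c n *\<^sub>C d n) (e x)))\<^sup>2)
      \<le> (\<Sum>x\<in>X. (\<Sum>n\<in>F. cmod (cinner (d n) (e x)) * \<bar>cmod (c n)\<bar>)\<^sup>2)"
    by (intro sum_mono power_mono) auto
  also have "\<dots> \<le> \<epsilon>\<^sup>2 * (\<Sum>n\<in>F. (cmod (c n))\<^sup>2)"
    using schur_bounded_Schur_test[OF M \<open>finite X\<close> \<open>finite F\<close>, of "\<lambda>n. cmod (c n)"] by simp
  finally show ?thesis .
qed

lemma localized_synthesis_bound:
  fixes g d :: "int \<Rightarrow> 'a::chilbert"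
  assumes frame: "frame g A B" and gram: "schur_bounded (gramian g) C"
    and M: "schur_bounded (\<lambda>x n. cinner (d n) (canonical_dual g x)) \<epsilon>" and "finite F"
  shows "norm (\<Sum>n\<in>F. c n *\<^sub>C d n) \<le> sqrt C * \<epsilon> * sqrt (\<Sum>n\<in>F. (cmod (c n))\<^sup>2)"
proof -
  have "norm (\<Sum>n\<in>F. c n *\<^sub>C d n) \<le> sqrt C * sqrt (\<epsilon>\<^sup>2 * (\<Sum>n\<in>F. (cmod (c n))\<^sup>2))"
    using frame gram coefficients_of_synthesis_bound[OF M \<open>finite F\<close>]
    by (rule norm_le_if_dual_coefficients_bounded)
  then show ?thesis
    using schur_bounded_nonneg[OF M] by (simp add: real_sqrt_mult mult.assoc)
qed

section \<open>Perturbation of frames\<close>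

context
  fixes f e :: "int \<Rightarrow> 'a::chilbert" and A B K :: real
  assumes frame: "frame f A B" and "0 \<le> K"
    and synthesis: "\<And>F c. finite F \<Longrightarrow>
      norm (\<Sum>n\<in>F. c n *\<^sub>C (e n - f n)) \<le> K * sqrt (\<Sum>n\<in>F. (cmod (c n))\<^sup>2)"
begin

lemma perturbation_L2_set_le:
  assumes "finite F"
  shows "L2_set (\<lambda>n. cmod (cinner y (e n - f n))) F \<le> K * norm y"
  using real_sqrt_le_mono[OF analysis_bound_if_synthesis_bound[OF synthesis[OF assms], of y]] \<open>0 \<le> K\<close>
  by (simp add: L2_set_def)

lemma perturbed_frame_upper_bound:
  shows "(\<lambda>n. (cmod (cinner y (e n)))\<^sup>2) summable_on UNIV"
    and "(\<Sum>\<^sub>\<infinity>n. (cmod (cinner y (e n)))\<^sup>2) \<le> ((sqrt B + K) * norm y)\<^sup>2"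
proof -
  have "L2_set (\<lambda>n. cmod (cinner y (e n))) F \<le> (sqrt B + K) * norm y" if "finite F" for F
    using L2_set_cinner_add_le[of y f "\<lambda>n. e n - f n" F]
      frame_analysis_L2_set_le[OF frame that, of y] perturbation_L2_set_le[OF that, of y]
    by (simp add: distrib_right)
  then show "(\<lambda>n. (cmod (cinner y (e n)))\<^sup>2) summable_on UNIV"
    and "(\<Sum>\<^sub>\<infinity>n. (cmod (cinner y (e n)))\<^sup>2) \<le> ((sqrt B + K) * norm y)\<^sup>2"
    by (fact square_summable_if_L2_set_le)+
qed

lemma perturbed_frame_lower_bound:
  "(sqrt A - K) * norm y \<le> sqrt (\<Sum>\<^sub>\<infinity>n. (cmod (cinner y (e n)))\<^sup>2)"
proof -
  define T where "T = sqrt (\<Sum>\<^sub>\<infinity>n. (cmod (cinner y (e n)))\<^sup>2)"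
  have "0 \<le> T" by (simp add: T_def infsum_nonneg)
  have "L2_set (\<lambda>n. cmod (cinner y (f n))) F \<le> T + K * norm y" if "finite F" for F
  proof -
    have "L2_set (\<lambda>n. cmod (cinner y (f n))) F
        \<le> L2_set (\<lambda>n. cmod (cinner y (e n))) F + L2_set (\<lambda>n. cmod (cinner y (f n - e n))) F"
      using L2_set_cinner_add_le[of y e "\<lambda>n. f n - e n" F] by simp
    moreover have "L2_set (\<lambda>n. cmod (cinner y (f n - e n))) F \<le> K * norm y"
      using perturbation_L2_set_le[OF that, of y] by (simp add: cinner.diff_right norm_minus_commute)
    moreover have "L2_set (\<lambda>n. cmod (cinner y (e n))) F \<le> T"
      unfolding T_def using perturbed_frame_upper_bound(1) that by (rule L2_set_le_sqrt_infsum)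
    ultimately show ?thesis by linarith
  qed
  then have "(\<Sum>\<^sub>\<infinity>n. (cmod (cinner y (f n)))\<^sup>2) \<le> (T + K * norm y)\<^sup>2"
    by (rule square_summable_if_L2_set_le(2))
  then have "sqrt (A * (norm y)\<^sup>2) \<le> sqrt ((T + K * norm y)\<^sup>2)"
    using frameD(4)[OF frame, of y] by (intro real_sqrt_le_mono) linarith
  then have "sqrt A * norm y \<le> T + K * norm y"
    using \<open>0 \<le> K\<close> \<open>0 \<le> T\<close> by (simp add: real_sqrt_mult)
  then show ?thesis
    by (simp add: T_def algebra_simps)
qed

lemma frame_perturbation:
  assumes "K < sqrt A"
  shows "frame e ((sqrt A - K)\<^sup>2) ((sqrt B + K)\<^sup>2)"
  unfolding frame_def
proof (intro conjI allI)
  have "sqrt A \<le> sqrt B" using frameD(2)[OF frame] by simp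
  then show "(sqrt A - K)\<^sup>2 \<le> (sqrt B + K)\<^sup>2"
    using \<open>0 \<le> K\<close> assms by (intro power_mono) linarith+
  fix y
  have "((sqrt A - K) * norm y)\<^sup>2 \<le> (sqrt (\<Sum>\<^sub>\<infinity>n. (cmod (cinner y (e n)))\<^sup>2))\<^sup>2"
    using perturbed_frame_lower_bound[of y] assms by (intro power_mono) auto
  then show "(sqrt A - K)\<^sup>2 * (norm y)\<^sup>2 \<le> (\<Sum>\<^sub>\<infinity>n. (cmod (cinner y (e n)))\<^sup>2)"
    by (simp add: power_mult_distrib infsum_nonneg)
  show "(\<Sum>\<^sub>\<infinity>n. (cmod (cinner y (e n)))\<^sup>2) \<le> (sqrt B + K)\<^sup>2 * (norm y)\<^sup>2"
    using perturbed_frame_upper_bound(2)[of y] by (simp add: power_mult_distrib)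
qed (use perturbed_frame_upper_bound(1) assms in auto)

end

section \<open>Schur algebras and the spaces H^p\<close>

lemma weight_zero [simp]: "weight 0 k = 1"
  by (simp add: weight_def)

lemma weight_nonneg: "0 \<le> weight s k"
  by (simp add: weight_def)

lemma weight_mono: "t \<le> s \<Longrightarrow> weight t k \<le> weight s k"
  unfolding weight_def by (rule powr_mono) auto

lemma in_schur_mono:
  assumes "in_schur s M" "t \<le> s"
  shows "in_schur t M"
proof -
  have le: "cmod (M k l) * weight t (k - l) \<le> cmod (M k l) * weight s (k - l)" for k l
    using weight_mono[OF \<open>t \<le> s\<close>] by (simp add: mult_left_mono)
  have nonneg: "0 \<le> cmod (M k l) * weight t (k - l)" for k l
    by (simp add: weight_nonneg)
  have s_rows: "(\<lambda>l. cmod (M k l) * weight s (k - l)) summable_on UNIV"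
    and s_cols: "(\<lambda>k. cmod (M k l) * weight s (k - l)) summable_on UNIV" for k l
    using assms(1) unfolding in_schur_def by blast+
  have rows: "(\<lambda>l. cmod (M k l) * weight t (k - l)) summable_on UNIV" for k
    by (rule summable_on_comparison_test[OF s_rows]) (use le nonneg in auto)
  have cols: "(\<lambda>k. cmod (M k l) * weight t (k - l)) summable_on UNIV" for l
    by (rule summable_on_comparison_test[OF s_cols]) (use le nonneg in auto)
  have row_le: "(\<Sum>\<^sub>\<infinity>l. cmod (M k l) * weight t (k - l)) \<le> (\<Sum>\<^sub>\<infinity>l. cmod (M k l) * weight s (k - l))" for k
    using rows s_rows le by (rule infsum_mono)
  have col_le: "(\<Sum>\<^sub>\<infinity>k. cmod (M k l) * weight t (k - l)) \<le> (\<Sum>\<^sub>\<infinity>k. cmod (M k l) * weight s (k - l))" for l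
    using cols s_cols le by (rule infsum_mono)
  obtain U1 U2 where U1: "\<And>k. (\<Sum>\<^sub>\<infinity>l. cmod (M k l) * weight s (k - l)) \<le> U1"
    and U2: "\<And>l. (\<Sum>\<^sub>\<infinity>k. cmod (M k l) * weight s (k - l)) \<le> U2"
    using assms(1) unfolding in_schur_def bdd_above_def by auto
  show ?thesis
    unfolding in_schur_def using rows cols order_trans[OF row_le U1] order_trans[OF col_le U2]
    by (auto intro: bdd_aboveI2[where M = U1] bdd_aboveI2[where M = U2])
qed

lemma schur_bounded_if_in_schur:
  assumes "in_schur 0 M"
  shows "schur_bounded M (schur_norm 0 M)"
proof -
  have "(\<Sum>\<^sub>\<infinity>l. cmod (M k l)) \<le> (SUP k. \<Sum>\<^sub>\<infinity>l. cmod (M k l))" for k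
    using assms unfolding in_schur_def by (intro cSUP_upper) auto
  moreover have "(\<Sum>\<^sub>\<infinity>k. cmod (M k l)) \<le> (SUP l. \<Sum>\<^sub>\<infinity>k. cmod (M k l))" for l
    using assms unfolding in_schur_def by (intro cSUP_upper) auto
  ultimately show ?thesis
    using assms unfolding in_schur_def schur_bounded_def schur_norm_def by (auto intro: max.coboundedI1 max.coboundedI2)
qed

lemma Hp_norm_le_one_iff:
  "Hp_norm_le g 1 h r \<longleftrightarrow>
    (\<lambda>x. cmod (cinner h (canonical_dual g x))) summable_on UNIV \<and>
    (\<Sum>\<^sub>\<infinity>x. cmod (cinner h (canonical_dual g x))) \<le> r"
  by (simp add: Hp_norm_le_def infsum_nonneg)

lemma dual_coefficient_le_Hinf_norm:
  assumes "(\<lambda>x. cmod (cinner h (canonical_dual g x))) summable_on UNIV"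
  shows "cmod (cinner h (canonical_dual g x)) \<le> Hinf_norm g h"
proof -
  have "cmod (cinner h (canonical_dual g y)) \<le> (\<Sum>\<^sub>\<infinity>x. cmod (cinner h (canonical_dual g x)))" for y
    using finite_sum_le_infsum[OF assms, of "{y}"] by simp
  then show ?thesis
    unfolding Hinf_norm_def by (intro cSUP_upper bdd_aboveI2) auto
qed

lemma sum_dual_coefficients_le_sum_Hinf_norm:
  assumes coeffs: "\<And>n. (\<lambda>x. cmod (cinner (d n) (canonical_dual g x))) summable_on UNIV"
    and "(\<lambda>n. Hinf_norm g (d n)) summable_on UNIV"
  shows "(\<lambda>n. cmod (cinner (d n) (canonical_dual g x))) summable_on UNIV"
    and "(\<Sum>\<^sub>\<infinity>n. cmod (cinner (d n) (canonical_dual g x))) \<le> (\<Sum>\<^sub>\<infinity>n. Hinf_norm g (d n))"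
proof -
  have le: "cmod (cinner (d n) (canonical_dual g x)) \<le> Hinf_norm g (d n)" for n
    using coeffs by (rule dual_coefficient_le_Hinf_norm)
  show "(\<lambda>n. cmod (cinner (d n) (canonical_dual g x))) summable_on UNIV"
    by (rule summable_on_comparison_test[OF assms(2)]) (use le in auto)
  then show "(\<Sum>\<^sub>\<infinity>n. cmod (cinner (d n) (canonical_dual g x))) \<le> (\<Sum>\<^sub>\<infinity>n. Hinf_norm g (d n))"
    using assms(2) le by (rule infsum_mono)
qed

theorem mainTheorem3:
  fixes g f e :: "int \<Rightarrow> 'a::chilbert"
    and s A \<epsilon> :: real
    and \<epsilon>n :: "int \<Rightarrow> real"
  assumes s_pos: "s > 0"
    and G_frame: "is_frame g"
    and G_loc: "in_schur s (gramian g)"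
    and F_frame: "\<exists>B. frame f A B"
    and E_close: "\<And>n p. 1 \<le> p \<Longrightarrow> Hp_norm_le g p (e n - f n) (\<epsilon>n n)"
    and E_close_inf: "\<And>n. Hinf_norm g (e n - f n) \<le> \<epsilon>n n"
    and eps_sup: "\<And>n. \<epsilon>n n \<le> \<epsilon>"
  defines "cond_i \<equiv> (\<lambda>n. Hinf_norm g (e n - f n)) summable_on UNIV \<and>
                      (\<Sum>\<^sub>\<infinity>n. Hinf_norm g (e n - f n)) \<le> \<epsilon>"
    and "cond_ii \<equiv> (\<forall>x. (\<lambda>n. cmod (cinner (e n - f n) (canonical_dual g x))) summable_on UNIV \<and>
                      (\<Sum>\<^sub>\<infinity>n. cmod (cinner (e n - f n) (canonical_dual g x))) \<le> \<epsilon>)"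
    and "cond_iii \<equiv> (\<forall>F c. finite F \<longrightarrow>
                      norm (\<Sum>n\<in>F. c n *\<^sub>C (e n - f n))
                        \<le> sqrt (schur_norm 0 (gramian g)) * \<epsilon> * sqrt (\<Sum>n\<in>F. (cmod (c n))\<^sup>2))"
  shows "(cond_i \<longrightarrow> cond_ii) \<and> (cond_ii \<longrightarrow> cond_iii) \<and>
         (\<epsilon> > 0 \<and> sqrt (schur_norm 0 (gramian g)) * \<epsilon> < sqrt A \<and>
          (cond_i \<or> cond_ii \<or> cond_iii) \<longrightarrow> is_frame e)"
proof -
  define d where "d n = e n - f n" for n
  define K where "K = sqrt (schur_norm 0 (gramian g)) * \<epsilon>"
  obtain A0 B0 where g_frame: "frame g A0 B0"
    using G_frame unfolding is_frame_def by blast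
  have gram: "schur_bounded (gramian g) (schur_norm 0 (gramian g))"
    using in_schur_mono[OF G_loc] s_pos by (simp add: schur_bounded_if_in_schur)
  have H1: "(\<lambda>x. cmod (cinner (d n) (canonical_dual g x))) summable_on UNIV"
    "(\<Sum>\<^sub>\<infinity>x. cmod (cinner (d n) (canonical_dual g x))) \<le> \<epsilon>" for n
    using E_close[of 1 n] eps_sup[of n] unfolding Hp_norm_le_one_iff d_def by auto
  have i_ii: cond_ii if cond_i
  proof -
    have Hinf: "(\<lambda>n. Hinf_norm g (d n)) summable_on UNIV" "(\<Sum>\<^sub>\<infinity>n. Hinf_norm g (d n)) \<le> \<epsilon>"
      using that unfolding cond_i_def d_def by auto
    note rows = sum_dual_coefficients_le_sum_Hinf_norm[OF H1(1) Hinf(1)]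
    show ?thesis
      using rows(1) order_trans[OF rows(2) Hinf(2)] unfolding cond_ii_def d_def by blast
  qed
  have ii_iii: cond_iii if cond_ii
    using localized_synthesis_bound[OF g_frame gram, of d \<epsilon>] that H1
    unfolding cond_ii_def cond_iii_def schur_bounded_def d_def by blast
  have "0 \<le> K"
    unfolding K_def using schur_bounded_nonneg[OF gram] order_trans[OF infsum_nonneg H1(2)] by simp
  have "is_frame e" if "K < sqrt A" cond_iii
    using F_frame frame_perturbation[OF _ \<open>0 \<le> K\<close> _ \<open>K < sqrt A\<close>] \<open>cond_iii\<close>
    unfolding is_frame_def cond_iii_def K_def by blast
  then show ?thesis
    using i_ii ii_iii unfolding K_def by blast
qed

end
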